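(* Let $a,b,k,n$ be positive integers with $k=a+b\ge2$ and $n\ge\max\{a,b\}$. Then $$\left(1+\frac an\right)^b\left(1-\frac bn\right)^a\ge1-\frac{\max\{ab^2,ba^2\}}{n^2}\ge1-\frac{(4/27)k^3}{n^2}.$$ *)

theory Defs
  imports Complex_Main
begin

end

theory Submission
  imports Defs "HOL-Analysis.Convex"
begin

text \<open>For \<open>a \<le> b\<close>, concavity of \<open>ln\<close> gives \<open>(1 + b/n)^a \<le> (1 + a/n)^b\<close>, so the product is at
  least \<open>(1 - b\<^sup>2/n\<^sup>2)^a\<close>, which Bernoulli's inequality bounds below by \<open>1 - a b\<^sup>2/n\<^sup>2\<close>; the case
  \<open>b \<le> a\<close> is the same estimate with \<open>1/n\<close> replaced by \<open>-1/n\<close>. The cubic bound is AM-GM for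
  \<open>a, b/2, b/2\<close>.\<close>

lemma power_one_add_mult_swap_le:
  fixes p q :: nat and z :: real
  assumes "p \<le> q" and "0 \<le> 1 + real q * z"
  shows "(1 + real q * z) ^ p \<le> (1 + real p * z) ^ q"
proof (cases "p = 0")
  case False
  define t where "t = real p / real q"
  have q_pos: "real q > 0" and t: "0 < t" "t \<le> 1"
    using assms False by (auto simp: t_def)
  have convex_comb: "1 - t + t * (1 + real q * z) = 1 + real p * z"
    using q_pos by (simp add: t_def field_simps)
  have p_nonneg: "0 \<le> 1 + real p * z"
    by (subst convex_comb[symmetric]) (use t assms in auto)
  show ?thesis
  proof (cases "1 + real q * z = 0")
    case True
    then show ?thesis using False p_nonneg by (simp add: power_0_left)
  next
    case False
    then have q_pos': "0 < 1 + real q * z" using assms by simp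
    then have p_pos: "0 < 1 + real p * z"
      by (subst convex_comb[symmetric]) (use t in \<open>auto intro: add_nonneg_pos\<close>)
    have "t * ln (1 + real q * z) \<le> ln (1 - t + t * (1 + real q * z))"
      using concave_onD[OF ln_concave, of t 1 "1 + real q * z"] t q_pos' by simp
    then have "t * ln (1 + real q * z) \<le> ln (1 + real p * z)"
      by (simp only: convex_comb)
    then have "real p * ln (1 + real q * z) \<le> real q * ln (1 + real p * z)"
      using q_pos by (simp add: t_def field_simps)
    then have "ln ((1 + real q * z) ^ p) \<le> ln ((1 + real p * z) ^ q)"
      using q_pos' p_pos by (simp add: ln_realpow)
    then show ?thesis using q_pos' p_pos by simp
  qed
qed simp

lemma power_one_add_mult_mult_power_one_diff_mult_ge:
  fixes a b :: nat and x :: real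
  assumes "a \<le> b" and "\<bar>real b * x\<bar> \<le> 1"
  shows "1 - real a * real b ^ 2 * x ^ 2 \<le> (1 + real a * x) ^ b * (1 - real b * x) ^ a"
proof -
  have "(real b * x) ^ 2 \<le> 1" using assms(2) by (simp add: abs_square_le_1)
  then have "1 - real a * real b ^ 2 * x ^ 2 \<le> (1 - (real b * x) ^ 2) ^ a"
    using Bernoulli_inequality[of "- ((real b * x) ^ 2)" a]
    by (simp add: power_mult_distrib mult.assoc)
  also have "\<dots> = (1 + real b * x) ^ a * (1 - real b * x) ^ a"
    by (simp add: power_mult_distrib[symmetric] algebra_simps power2_eq_square)
  also have "\<dots> \<le> (1 + real a * x) ^ b * (1 - real b * x) ^ a"
    using power_one_add_mult_swap_le[of a b x] assms by (intro mult_right_mono) auto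
  finally show ?thesis .
qed

lemma power_one_add_mult_mult_power_one_diff_mult_ge_max:
  fixes a b :: nat and x :: real
  assumes "\<bar>real a * x\<bar> \<le> 1" and "\<bar>real b * x\<bar> \<le> 1"
  shows "1 - real (max (a * b^2) (b * a^2)) * x ^ 2
           \<le> (1 + real a * x) ^ b * (1 - real b * x) ^ a"
proof (cases "a \<le> b")
  case True
  have "real (a * b^2) * x ^ 2 \<le> real (max (a * b^2) (b * a^2)) * x ^ 2"
    by (intro mult_right_mono of_nat_mono) auto
  then have "1 - real (max (a * b^2) (b * a^2)) * x ^ 2 \<le> 1 - real a * real b ^ 2 * x ^ 2"
    by simp
  also have "\<dots> \<le> (1 + real a * x) ^ b * (1 - real b * x) ^ a"
    using power_one_add_mult_mult_power_one_diff_mult_ge[OF True assms(2)] .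
  finally show ?thesis .
next
  case False
  have "real (b * a^2) * x ^ 2 \<le> real (max (a * b^2) (b * a^2)) * x ^ 2"
    by (intro mult_right_mono of_nat_mono) auto
  then have "1 - real (max (a * b^2) (b * a^2)) * x ^ 2 \<le> 1 - real b * real a ^ 2 * (- x) ^ 2"
    by simp
  also have "\<dots> \<le> (1 + real b * (- x)) ^ a * (1 - real a * (- x)) ^ b"
    using power_one_add_mult_mult_power_one_diff_mult_ge[of b a "- x"] False assms(1) by simp
  also have "\<dots> = (1 + real a * x) ^ b * (1 - real b * x) ^ a"
    by simp
  finally show ?thesis .
qed

lemma mult_square_le_cube_of_add:
  fixes u v :: real
  assumes "0 \<le> u" and "0 \<le> v"
  shows "27 * (u * v ^ 2) \<le> 4 * (u + v) ^ 3"
proof -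
  have "0 \<le> (v - 2 * u) ^ 2 * (4 * v + u)" using assms by simp
  then show ?thesis by (simp add: algebra_simps power2_eq_square power3_eq_cube)
qed

lemma max_mult_square_le_cube_of_add:
  fixes a b :: nat
  shows "real (max (a * b^2) (b * a^2)) \<le> (4/27) * real (a + b) ^ 3"
  using mult_square_le_cube_of_add[of "real a" "real b"]
    mult_square_le_cube_of_add[of "real b" "real a"]
  by (auto simp: max_def add.commute)

theorem lemma5p5:
  fixes a b k n :: nat
  assumes "a > 0" and "b > 0" and "k = a + b" and "k \<ge> 2"
    and "n \<ge> max a b"
  shows "(1 + real a / real n) ^ b * (1 - real b / real n) ^ a
           \<ge> 1 - real (max (a * b^2) (b * a^2)) / (real n)^2
         \<and> 1 - real (max (a * b^2) (b * a^2)) / (real n)^2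
           \<ge> 1 - (4/27) * (real k)^3 / (real n)^2"
proof
  have n_pos: "real n > 0" using assms by simp
  have "\<bar>real a * (1 / real n)\<bar> \<le> 1" and "\<bar>real b * (1 / real n)\<bar> \<le> 1"
    using assms n_pos by auto
  from power_one_add_mult_mult_power_one_diff_mult_ge_max[OF this]
  show "(1 + real a / real n) ^ b * (1 - real b / real n) ^ a
          \<ge> 1 - real (max (a * b^2) (b * a^2)) / (real n)^2"
    by (simp add: power2_eq_square)
  have "real (max (a * b^2) (b * a^2)) / (real n)^2 \<le> (4/27) * (real k)^3 / (real n)^2"
    using max_mult_square_le_cube_of_add[of a b] assms(3) by (intro divide_right_mono) auto
  then show "1 - real (max (a * b^2) (b * a^2)) / (real n)^2
               \<ge> 1 - (4/27) * (real k)^3 / (real n)^2"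
    by simp
qed

end
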